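(* Let $H$ and $F_\varepsilon$, $\varepsilon>0$, be self-adjoint operators in a Hilbert space $\mathscr K$ such that $H\ge 1$, $F_\varepsilon\ge 0$, and each $F_\varepsilon$ is bounded. Let $m\in\mathbb N\cup\{\infty\}$, let $\mathscr D$ be a form core for $H$, and assume: (a) For every $\varepsilon>0$, $F_\varepsilon$ maps $\mathscr D$ into the form domain $\mathcal Q(H)$ and there is $c_\varepsilon\in(0,\infty)$ with $\langle F_\varepsilon\psi, H F_\varepsilon\psi\rangle\le c_\varepsilon\langle \psi, H\psi\rangle$ for all $\psi\in\mathscr D$ (the left side understood as the quadratic form of $H$). (b) There is $c\in[1,\infty)$ such that for all $\varepsilon>0$ and $\psi\in\mathscr D$: $\langle\psi,F_\varepsilon^2\psi\rangle\le c^2\langle\psi,H\psi\rangle$. (c) For every $n\in\mathbb N$ with $n<m$ there is $c_n\in[1,\infty)$ such that for all $\varepsilon>0$ and all $\varphi_1,\varphi_2\in\mathscr D$: $$\big|\langle H\varphi_1,F_\varepsilon^n\varphi_2\rangle-\langle F_\varepsilon^n\varphi_1,H\varphi_2\rangle\big|\le c_n\big\{\langle\varphi_1,H\varphi_1\rangle+\langle F_\varepsilon^{n-1}\varphi_2,HF_\varepsilon^{n-1}\varphi_2\rangle\big\}$$ (all expressions understood as quadratic/sesquilinear forms of $H$). Then for every $n\in\mathbb N$ with $n<m+1$ and every $\varepsilon>0$, $$\|F_\varepsilon^n H^{-n/2}\|\le C_n:=4^{n-1}c^n\prod_{\ell=1}^{n-1}c_\ell,$$ where an empty product equals $1$.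
   Context: $\mathcal Q(H)=\mathcal D(H^{1/2})$ denotes the form domain of $H$; a form core is a subspace dense in $\mathcal Q(H)$ with respect to the form norm. *)

theory Defs
  imports "HOL-Analysis.Analysis" "HOL-Library.Extended_Nat"
begin

text \<open>A complex Hilbert space, presented as a real Hilbert space together with
  an orthogonal complex structure cJ (multiplication by the imaginary unit).\<close>

class complex_hilbert = real_inner + complete_space +
  fixes cJ :: "'a \<Rightarrow> 'a"
  assumes cJ_add: "cJ (x + y) = cJ x + cJ y"
    and cJ_scaleR: "cJ (r *\<^sub>R x) = r *\<^sub>R cJ x"
    and cJ_cJ: "cJ (cJ x) = - x"
    and cJ_inner: "inner (cJ x) (cJ y) = inner x y"

text \<open>Complex scalar multiplication and the complex inner product
  (antilinear in the first, linear in the second argument).\<close>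

definition hscaleC :: "complex \<Rightarrow> 'a::complex_hilbert \<Rightarrow> 'a" where
  "hscaleC c x = Re c *\<^sub>R x + Im c *\<^sub>R cJ x"

definition hinner :: "'a::complex_hilbert \<Rightarrow> 'a \<Rightarrow> complex" where
  "hinner x y = Complex (inner x y) (inner (cJ x) y)"

definition hsubspace :: "'a::complex_hilbert set \<Rightarrow> bool" where
  "hsubspace S \<longleftrightarrow> 0 \<in> S \<and> (\<forall>x\<in>S. \<forall>y\<in>S. x + y \<in> S) \<and> (\<forall>c. \<forall>x\<in>S. hscaleC c x \<in> S)"

definition hlinear_on :: "'a::complex_hilbert set \<Rightarrow> ('a \<Rightarrow> 'a) \<Rightarrow> bool" where
  "hlinear_on D T \<longleftrightarrow> hsubspace D \<and> (\<forall>x\<in>D. \<forall>y\<in>D. T (x + y) = T x + T y)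
     \<and> (\<forall>c. \<forall>x\<in>D. T (hscaleC c x) = hscaleC c (T x))"

text \<open>Self-adjoint: densely defined, and the adjoint (domain and action) equals T.\<close>

definition self_adjoint_op :: "'a::complex_hilbert set \<Rightarrow> ('a \<Rightarrow> 'a) \<Rightarrow> bool" where
  "self_adjoint_op D T \<longleftrightarrow> hlinear_on D T \<and> closure D = UNIV \<and>
     (\<forall>y z. (\<forall>x\<in>D. hinner (T x) y = hinner x z) \<longleftrightarrow> (y \<in> D \<and> T y = z))"

definition op_ge :: "'a::complex_hilbert set \<Rightarrow> ('a \<Rightarrow> 'a) \<Rightarrow> real \<Rightarrow> bool" where
  "op_ge D T a \<longleftrightarrow> (\<forall>x\<in>D. a * (norm x)\<^sup>2 \<le> Re (hinner x (T x)))"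

definition bounded_self_adjoint :: "('a::complex_hilbert \<Rightarrow> 'a) \<Rightarrow> bool" where
  "bounded_self_adjoint T \<longleftrightarrow> bounded_linear T \<and> self_adjoint_op UNIV T"

definition op_inv :: "'a::complex_hilbert set \<Rightarrow> ('a \<Rightarrow> 'a) \<Rightarrow> 'a \<Rightarrow> 'a" where
  "op_inv D H y = (THE x. x \<in> D \<and> H x = y)"

definition pos_sqrt :: "('a::complex_hilbert \<Rightarrow> 'a) \<Rightarrow> 'a \<Rightarrow> 'a" where
  "pos_sqrt A = (THE B. bounded_self_adjoint B \<and> op_ge UNIV B 0 \<and> (\<forall>x. B (B x) = A x))"

text \<open>H^{-1/2}, H^{-n/2} = (H^{-1/2})^n, the form domain Q(H) = D(H^{1/2}) = ran H^{-1/2},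
  H^{1/2} on Q(H), and the sesquilinear form of H.\<close>

definition Hmhalf :: "'a::complex_hilbert set \<Rightarrow> ('a \<Rightarrow> 'a) \<Rightarrow> 'a \<Rightarrow> 'a" where
  "Hmhalf D H = pos_sqrt (op_inv D H)"

definition Hmpow :: "'a::complex_hilbert set \<Rightarrow> ('a \<Rightarrow> 'a) \<Rightarrow> nat \<Rightarrow> 'a \<Rightarrow> 'a" where
  "Hmpow D H n = (Hmhalf D H) ^^ n"

definition form_dom :: "'a::complex_hilbert set \<Rightarrow> ('a \<Rightarrow> 'a) \<Rightarrow> 'a set" where
  "form_dom D H = range (Hmhalf D H)"

definition Hhalf :: "'a::complex_hilbert set \<Rightarrow> ('a \<Rightarrow> 'a) \<Rightarrow> 'a \<Rightarrow> 'a" where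
  "Hhalf D H \<psi> = (THE x. Hmhalf D H x = \<psi>)"

definition hform :: "'a::complex_hilbert set \<Rightarrow> ('a \<Rightarrow> 'a) \<Rightarrow> 'a \<Rightarrow> 'a \<Rightarrow> complex" where
  "hform D H \<phi> \<psi> = hinner (Hhalf D H \<phi>) (Hhalf D H \<psi>)"

definition form_norm :: "'a::complex_hilbert set \<Rightarrow> ('a \<Rightarrow> 'a) \<Rightarrow> 'a \<Rightarrow> real" where
  "form_norm D H \<psi> = sqrt ((norm \<psi>)\<^sup>2 + Re (hform D H \<psi> \<psi>))"

definition form_core :: "'a::complex_hilbert set \<Rightarrow> ('a \<Rightarrow> 'a) \<Rightarrow> 'a set \<Rightarrow> bool" where
  "form_core D H S \<longleftrightarrow> hsubspace S \<and> S \<subseteq> form_dom D H \<and>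
     (\<forall>\<phi>\<in>form_dom D H. \<forall>e>0. \<exists>\<psi>\<in>S. form_norm D H (\<phi> - \<psi>) < e)"

end

theory Submission
  imports Defs "HOL-Computational_Algebra.Formal_Power_Series"
begin

text \<open>
  Write \<open>R = H\<^sup>-\<^sup>1\<^sup>/\<^sup>2\<close>. By (a) the operator \<open>G = R\<^sup>-\<^sup>1 F R\<close>, defined on the preimage of the
  form core, extends to a bounded operator with \<open>F\<^sup>j R = R G\<^sup>j\<close>, and (b) says
  \<open>\<parallel>F R\<parallel> \<le> c\<close>, hence also \<open>\<parallel>R F\<parallel> \<le> c\<close>. In terms of \<open>G\<close>, (c) bounds the commutator
  \<open>\<langle>u\<^sub>1, G\<^sup>n u\<^sub>2\<rangle> - \<langle>G\<^sup>n u\<^sub>1, u\<^sub>2\<rangle>\<close>, and scaling \<open>u\<^sub>1, u\<^sub>2\<close> turns the bound into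
  \<open>2 c\<^sub>n \<parallel>u\<^sub>1\<parallel> \<parallel>G\<^sup>n\<^sup>-\<^sup>1 u\<^sub>2\<parallel>\<close>. For \<open>v = G\<^sup>n R\<^sup>n x\<close> this gives
  \<open>\<parallel>v\<parallel>\<^sup>2 = \<langle>v, G\<^sup>n R\<^sup>n x\<rangle> \<le> |\<langle>v, R F\<^sup>n R\<^sup>n\<^sup>-\<^sup>1 x\<rangle>| + 2 c\<^sub>n \<parallel>v\<parallel> \<parallel>G\<^sup>n\<^sup>-\<^sup>1 R\<^sup>n x\<parallel>\<close>,
  so by induction \<open>\<parallel>G\<^sup>n R\<^sup>n\<parallel> \<le> 4\<^sup>n c\<^sup>n c\<^sub>1 \<cdots> c\<^sub>n\<close> for \<open>n < m\<close>, and finally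
  \<open>F\<^sup>n R\<^sup>n = F R G\<^sup>n\<^sup>-\<^sup>1 R\<^sup>n\<^sup>-\<^sup>1\<close>.

  The operators \<open>H\<^sup>-\<^sup>1\<close> and \<open>H\<^sup>-\<^sup>1\<^sup>/\<^sup>2\<close> have to be constructed: \<open>H\<close> is onto by the
  projection theorem, and the square root of \<open>0 \<le> H\<^sup>-\<^sup>1 \<le> 1\<close> is the binomial series of
  \<open>\<surd>(1 - t)\<close> evaluated at \<open>1 - H\<^sup>-\<^sup>1\<close>.
\<close>

section \<open>The complex structure\<close>

subclass (in complex_hilbert) banach ..

lemma cJ_minus: "cJ (- x) = - cJ x"
  using cJ_scaleR[of "-1" x] by simp

lemma cJ_diff: "cJ (x - y) = cJ x - cJ y"
  using cJ_add[of x "-y"] by (simp add: cJ_minus)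

lemma bounded_linear_cJ: "bounded_linear cJ"
proof (rule bounded_linear_intro[where K = 1])
  show "norm (cJ x) \<le> norm x * 1" for x
    using cJ_inner[of x x] by (simp add: norm_eq_sqrt_inner)
qed (simp_all add: cJ_add cJ_scaleR)

lemma inner_cJ_self [simp]: "inner x (cJ x) = 0"
proof -
  have "inner x (cJ x) = inner (cJ x) (cJ (cJ x))" by (simp add: cJ_inner)
  also have "\<dots> = - inner x (cJ x)" by (simp add: cJ_cJ inner_commute)
  finally show ?thesis by simp
qed

lemma Re_hinner [simp]: "Re (hinner x y) = inner x y"
  and Im_hinner [simp]: "Im (hinner x y) = inner (cJ x) y"
  by (simp_all add: hinner_def)

lemma hinner_self: "hinner x x = complex_of_real ((norm x)\<^sup>2)"
  by (simp add: complex_eq_iff power2_norm_eq_inner inner_commute)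

lemma hinner_scaleR_left: "hinner (r *\<^sub>R x) z = complex_of_real r * hinner x z"
  and hinner_scaleR_right: "hinner z (r *\<^sub>R x) = complex_of_real r * hinner z x"
  by (simp_all add: complex_eq_iff cJ_scaleR)

lemma cmod_hinner_le: "cmod (hinner x y) \<le> norm x * norm y"
proof -
  define p q where "p = inner x y" and "q = inner (cJ x) y"
  define w where "w = p *\<^sub>R x + q *\<^sub>R cJ x"
  have "(p\<^sup>2 + q\<^sup>2)\<^sup>2 = (inner w y)\<^sup>2"
    by (simp add: w_def p_def q_def inner_add_left power2_eq_square)
  also have "\<dots> \<le> (norm w)\<^sup>2 * (norm y)\<^sup>2"
    using Cauchy_Schwarz_ineq[of w y] by (simp add: power2_norm_eq_inner)
  also have "(norm w)\<^sup>2 = (p\<^sup>2 + q\<^sup>2) * (norm x)\<^sup>2"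
    unfolding w_def power2_norm_eq_inner
    by (simp add: inner_add_left inner_add_right cJ_inner inner_commute[of "cJ x" x]
        algebra_simps power2_eq_square)
  finally have le: "(p\<^sup>2 + q\<^sup>2) * (p\<^sup>2 + q\<^sup>2) \<le> (p\<^sup>2 + q\<^sup>2) * (norm x * norm y)\<^sup>2"
    by (simp add: power2_eq_square algebra_simps)
  have "p\<^sup>2 + q\<^sup>2 \<le> (norm x * norm y)\<^sup>2"
  proof (cases "p\<^sup>2 + q\<^sup>2 = 0")
    case False
    then have "p\<^sup>2 + q\<^sup>2 > 0" by (simp add: sum_power2_gt_zero_iff)
    with le show ?thesis by (simp add: mult_le_cancel_left_pos)
  qed simp
  then show ?thesis
    by (simp add: cmod_def p_def q_def real_le_lsqrt)
qed

lemma tendsto_hinner [tendsto_intros]: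
  "(f \<longlongrightarrow> a) F \<Longrightarrow> (g \<longlongrightarrow> b) F \<Longrightarrow> ((\<lambda>x. hinner (f x) (g x)) \<longlongrightarrow> hinner a b) F"
  unfolding hinner_def Complex_eq
  by (intro tendsto_intros bounded_linear.tendsto[OF bounded_linear_cJ])

lemma continuous_on_hinner [continuous_intros]:
  "continuous_on S f \<Longrightarrow> continuous_on S g \<Longrightarrow> continuous_on S (\<lambda>x. hinner (f x) (g x))"
  unfolding hinner_def Complex_eq
  by (intro continuous_intros bounded_linear.continuous_on[OF bounded_linear_cJ]) auto

lemma hscaleC_of_real: "hscaleC (complex_of_real r) x = r *\<^sub>R x"
  and hscaleC_ii: "hscaleC \<i> x = cJ x"
  by (simp_all add: hscaleC_def)

lemma hsubspace_diff:
  assumes "hsubspace S" "x \<in> S" "y \<in> S"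
  shows "x - y \<in> S"
proof -
  have "hscaleC (-1) y \<in> S" using assms by (simp add: hsubspace_def)
  then have "- y \<in> S" using hscaleC_of_real[of "-1" y] by simp
  then have "x + - y \<in> S" using assms unfolding hsubspace_def by blast
  then show ?thesis by simp
qed

definition hermitian :: "('a::complex_hilbert \<Rightarrow> 'a) \<Rightarrow> bool" where
  "hermitian T \<longleftrightarrow> bounded_linear T \<and> (\<forall>x. T (cJ x) = cJ (T x)) \<and> (\<forall>x y. inner (T x) y = inner x (T y))"

lemma hermitianD:
  assumes "hermitian T"
  shows "bounded_linear T" "T (cJ x) = cJ (T x)" "inner (T x) y = inner x (T y)"
  using assms by (simp_all add: hermitian_def)

lemma hermitian_hinner:
  assumes "hermitian T"
  shows "hinner (T x) y = hinner x (T y)"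
proof -
  have "cJ (T x) = T (cJ x)" by (simp add: hermitianD(2)[OF assms])
  then show ?thesis by (simp add: complex_eq_iff hermitianD(3)[OF assms])
qed

lemma inner_eq_all_imp_eq: "(\<And>x. inner x z = inner x w) \<Longrightarrow> z = w"
  by (metis inner_diff_left inner_diff_right inner_eq_zero_iff right_minus_eq)

lemma bounded_self_adjoint_iff_hermitian: "bounded_self_adjoint T \<longleftrightarrow> hermitian T"
proof
  assume "bounded_self_adjoint T"
  then have bl: "bounded_linear T" and sa: "self_adjoint_op UNIV T"
    by (auto simp: bounded_self_adjoint_def)
  from sa have "\<forall>c x. T (hscaleC c x) = hscaleC c (T x)"
    by (simp add: self_adjoint_op_def hlinear_on_def)
  then have "\<forall>x. T (cJ x) = cJ (T x)" by (metis hscaleC_ii)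
  moreover from sa have "\<And>y. \<forall>x. hinner (T x) y = hinner x (T y)"
    by (auto simp: self_adjoint_op_def)
  then have "\<forall>x y. inner (T x) y = inner x (T y)" by (metis Re_hinner)
  ultimately show "hermitian T" using bl by (simp add: hermitian_def)
next
  assume T: "hermitian T"
  interpret bounded_linear T by (rule hermitianD(1)[OF T])
  have "hlinear_on UNIV T"
    by (simp add: hlinear_on_def hsubspace_def add hscaleC_def scaleR hermitianD(2)[OF T])
  moreover have "(\<forall>x\<in>UNIV. hinner (T x) y = hinner x z) \<longleftrightarrow> (y \<in> UNIV \<and> T y = z)" for y z
  proof
    assume h: "\<forall>x\<in>UNIV. hinner (T x) y = hinner x z"
    have "inner x z = inner x (T y)" for x
      using h[rule_format, of x] hermitian_hinner[OF T, of x y] by (metis Re_hinner UNIV_I)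
    then show "y \<in> UNIV \<and> T y = z" using inner_eq_all_imp_eq[of z "T y"] by simp
  qed (simp add: hermitian_hinner[OF T])
  ultimately show "bounded_self_adjoint T"
    by (simp add: bounded_self_adjoint_def self_adjoint_op_def bounded_linear_axioms)
qed

lemma hermitian_funpow: "hermitian T \<Longrightarrow> hermitian (T ^^ k)"
proof (induction k)
  case 0
  then show ?case by (simp add: hermitian_def bounded_linear_ident)
next
  case (Suc k)
  note T = hermitianD[OF Suc.prems] and Tk = hermitianD[OF Suc.IH[OF Suc.prems]]
  have "bounded_linear (T ^^ Suc k)"
    using bounded_linear_compose[OF T(1) Tk(1)] by (simp add: o_def)
  moreover have "(T ^^ Suc k) (cJ x) = cJ ((T ^^ Suc k) x)" for x
    by (simp add: T(2) Tk(2))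
  moreover have "inner ((T ^^ Suc k) x) y = inner x ((T ^^ Suc k) y)" for x y
    using T(3)[of "(T ^^ k) x" y] Tk(3)[of x "T y"] by (simp add: funpow_swap1)
  ultimately show ?case by (simp add: hermitian_def del: funpow.simps)
qed

lemma hermitian_nonneg_form_eq_0:
  assumes T: "hermitian T" and pos: "\<And>x. 0 \<le> inner x (T x)" and y: "inner y (T y) = 0"
  shows "T y = 0"
proof (rule ccontr)
  interpret bounded_linear T by (rule hermitianD(1)[OF T])
  assume "T y \<noteq> 0"
  define w where "w = T y"
  define K N where "K = inner w (T w)" and "N = inner w w"
  have K: "K \<ge> 0" and N: "N > 0"
    using pos \<open>T y \<noteq> 0\<close> by (simp_all add: K_def N_def w_def)
  define s where "s = N / (K + 1)"
  have s: "s > 0" using K N by (simp add: s_def)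
  have "0 \<le> inner (y - s *\<^sub>R w) (T (y - s *\<^sub>R w))" by (rule pos)
  also have "\<dots> = inner y (T y) - s * inner w (T y) - s * inner y (T w) + s * s * K"
    by (simp add: diff scaleR inner_diff_left inner_diff_right K_def algebra_simps)
  also have "inner y (T w) = inner (T y) w" by (simp add: hermitianD(3)[OF T])
  finally have "2 * s * N \<le> s * (s * K)"
    using y by (simp add: w_def N_def inner_commute algebra_simps)
  then have "2 * N \<le> s * K" using s by (simp add: mult.assoc)
  also have "s * K < N"
    using K N by (simp add: s_def field_simps)
  finally show False using N by simp
qed

section \<open>The binomial series of \<open>\<surd>(1 - t)\<close>\<close>

definition sqrt_coeff :: "nat \<Rightarrow> real" where
  "sqrt_coeff k = (-1) ^ k * ((1/2) gchoose k)"

lemma sqrt_coeff_0 [simp]: "sqrt_coeff 0 = 1"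
  by (simp add: sqrt_coeff_def)

lemma sqrt_coeff_Suc: "sqrt_coeff (Suc k) = sqrt_coeff k * ((real k - 1/2) / (real k + 1))"
proof -
  have "real (Suc k) * ((1/2::real) gchoose Suc k) = (1/2 - real k) * ((1/2) gchoose k)"
    using gbinomial_mult_1[of "1/2::real" k] by (simp add: algebra_simps)
  then have "((1/2::real) gchoose Suc k) = - ((real k - 1/2) / (real k + 1)) * ((1/2) gchoose k)"
    by (simp add: field_simps)
  then show ?thesis by (simp add: sqrt_coeff_def)
qed

lemma sqrt_coeff_nonpos: "k \<ge> 1 \<Longrightarrow> sqrt_coeff k \<le> 0"
proof (induction k)
  case (Suc k)
  show ?case
  proof (cases "k = 0")
    case False
    then have "sqrt_coeff k \<le> 0" "(real k - 1/2) / (real k + 1) \<ge> 0"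
      using Suc by simp_all
    then show ?thesis unfolding sqrt_coeff_Suc by (rule mult_nonpos_nonneg)
  qed (simp add: sqrt_coeff_Suc)
qed simp

lemma sum_sqrt_coeff: "(\<Sum>k\<le>N. sqrt_coeff k) = sqrt_coeff N * (1 - 2 * real N)"
proof (induction N)
  case (Suc N)
  have "sqrt_coeff (Suc N) * (real N + 1) = sqrt_coeff N * (real N - 1/2)"
    unfolding sqrt_coeff_Suc by (simp add: field_simps)
  with Suc.IH show ?case by (auto simp: algebra_simps)
qed simp

lemma sum_sqrt_coeff_nonneg: "(\<Sum>k\<le>N. sqrt_coeff k) \<ge> 0"
  by (cases "N = 0") (simp_all add: sum_sqrt_coeff sqrt_coeff_nonpos mult_nonpos_nonpos)

lemma sum_abs_sqrt_coeff_le: "(\<Sum>k\<le>N. \<bar>sqrt_coeff k\<bar>) \<le> 2"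
proof -
  have "(\<Sum>k\<le>N. \<bar>sqrt_coeff k\<bar>) = (\<Sum>k\<le>N. (if k = 0 then 2 else 0) - sqrt_coeff k)"
    using sqrt_coeff_nonpos by (intro sum.cong) auto
  also have "\<dots> = 2 - (\<Sum>k\<le>N. sqrt_coeff k)"
    by (simp add: sum_subtractf)
  finally show ?thesis using sum_sqrt_coeff_nonneg[of N] by linarith
qed

lemma sum_lessThan_abs_sqrt_coeff_le: "(\<Sum>k<N. \<bar>sqrt_coeff k\<bar>) \<le> 2"
  by (cases N) (simp_all add: lessThan_Suc_atMost sum_abs_sqrt_coeff_le)

lemma summable_abs_sqrt_coeff: "summable (\<lambda>k. \<bar>sqrt_coeff k\<bar>)"
  by (rule bounded_imp_summable[where B = 2]) (auto intro: sum_abs_sqrt_coeff_le)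

lemma summable_sqrt_coeff: "summable sqrt_coeff"
  using summable_abs_sqrt_coeff summable_rabs_cancel by blast

lemma suminf_sqrt_coeff_nonneg: "suminf sqrt_coeff \<ge> 0"
proof (rule LIMSEQ_le_const[OF summable_LIMSEQ[OF summable_sqrt_coeff]])
  have "0 \<le> (\<Sum>k<n. sqrt_coeff k)" for n
    by (cases n) (simp_all add: lessThan_Suc_atMost sum_sqrt_coeff_nonneg)
  then show "\<exists>N. \<forall>n\<ge>N. 0 \<le> (\<Sum>k<n. sqrt_coeff k)" by blast
qed

text \<open>The Cauchy square of the series is \<open>1 - t\<close>; this is Vandermonde's identity.\<close>

lemma sqrt_coeff_convolution:
  "(\<Sum>i\<le>k. sqrt_coeff i * sqrt_coeff (k - i)) = (if k = 0 then 1 else if k = 1 then -1 else 0)"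
proof -
  have "(\<Sum>i\<le>k. sqrt_coeff i * sqrt_coeff (k - i))
      = (-1) ^ k * (\<Sum>i\<le>k. ((1/2::real) gchoose i) * ((1/2) gchoose (k - i)))"
    unfolding sum_distrib_left
  proof (rule sum.cong)
    fix i assume "i \<in> {..k}"
    then have "(-1::real) ^ i * (-1) ^ (k - i) = (-1) ^ k"
      by (simp flip: power_add)
    then show "sqrt_coeff i * sqrt_coeff (k - i) = (-1) ^ k * (((1/2) gchoose i) * ((1/2) gchoose (k - i)))"
      unfolding sqrt_coeff_def by (metis (no_types, lifting) mult.assoc mult.left_commute)
  qed simp
  also have "\<dots> = (-1) ^ k * ((1::real) gchoose k)"
    by (simp add: gbinomial_Vandermonde atMost_atLeast0)
  also have "\<dots> = (-1) ^ k * real (1 choose k)"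
    using binomial_gbinomial[of 1 k, where 'a = real] by simp
  also have "\<dots> = (if k = 0 then 1 else if k = 1 then -1 else 0)"
    by (cases k) (auto simp: binomial_eq_0)
  finally show ?thesis .
qed

lemma square_minus_triangle_sum_tendsto_0:
  fixes a :: "nat \<Rightarrow> real"
  assumes a: "summable (\<lambda>k. \<bar>a k\<bar>)"
  shows "(\<lambda>N. \<Sum>(i, j)\<in>{..<N} \<times> {..<N} - {(i, j). i + j < N}. \<bar>a i\<bar> * \<bar>a j\<bar>) \<longlonglongrightarrow> 0"
proof -
  let ?f = "\<lambda>(i, j). \<bar>a i\<bar> * \<bar>a j\<bar>"
  have "(\<lambda>N. (\<Sum>k<N. \<bar>a k\<bar>) * (\<Sum>k<N. \<bar>a k\<bar>)) \<longlonglongrightarrow> (\<Sum>k. \<bar>a k\<bar>) * (\<Sum>k. \<bar>a k\<bar>)"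
    using a by (intro tendsto_mult summable_LIMSEQ)
  then have square: "(\<lambda>N. sum ?f ({..<N} \<times> {..<N})) \<longlonglongrightarrow> (\<Sum>k. \<bar>a k\<bar>) * (\<Sum>k. \<bar>a k\<bar>)"
    by (simp add: sum_product sum.cartesian_product)
  have triangle: "(\<lambda>N. sum ?f {(i, j). i + j < N}) \<longlonglongrightarrow> (\<Sum>k. \<bar>a k\<bar>) * (\<Sum>k. \<bar>a k\<bar>)"
    using Cauchy_product_sums[of "\<lambda>k. \<bar>a k\<bar>" "\<lambda>k. \<bar>a k\<bar>"] a
    by (simp add: sums_def sum.triangle_reindex)
  have "{(i, j). i + j < N} \<subseteq> {..<N} \<times> {..<N}" for N :: nat by auto
  then show ?thesis
    using tendsto_diff[OF square triangle] by (simp add: sum_diff)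
qed

section \<open>Square roots of positive contractions\<close>

text \<open>For hermitian \<open>A\<close> the second assumption says \<open>A\<^sup>2 \<le> A\<close>, i.e. \<open>0 \<le> A \<le> 1\<close>.\<close>

locale positive_contraction =
  fixes A :: "'a::complex_hilbert \<Rightarrow> 'a"
  assumes hermitian_A: "hermitian A"
    and norm_square_le_form: "\<And>y. (norm (A y))\<^sup>2 \<le> inner y (A y)"
begin

definition T :: "'a \<Rightarrow> 'a" where "T x = x - A x"

definition partial_root :: "nat \<Rightarrow> 'a \<Rightarrow> 'a" where
  "partial_root N x = (\<Sum>k<N. sqrt_coeff k *\<^sub>R (T ^^ k) x)"

definition root :: "'a \<Rightarrow> 'a" where "root x = (\<Sum>k. sqrt_coeff k *\<^sub>R (T ^^ k) x)"

lemma hermitian_T: "hermitian T"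
proof -
  interpret bounded_linear A by (rule hermitianD(1)[OF hermitian_A])
  have "bounded_linear (\<lambda>x. x - A x)"
    by (intro bounded_linear_sub bounded_linear_ident bounded_linear_axioms)
  then show ?thesis
    using hermitian_A
    by (auto simp: hermitian_def T_def[abs_def] diff cJ_diff inner_diff_left inner_diff_right)
qed

lemma hermitian_T_pow: "hermitian (T ^^ k)"
  by (rule hermitian_funpow[OF hermitian_T])

lemmas bounded_linear_T_pow = hermitianD(1)[OF hermitian_T_pow]

lemma norm_T_le: "norm (T x) \<le> norm x"
proof -
  have "(norm (T x))\<^sup>2 = (norm x)\<^sup>2 - 2 * inner x (A x) + (norm (A x))\<^sup>2"
    unfolding T_def power2_norm_eq_inner
    by (simp add: inner_diff_left inner_diff_right inner_commute[of "A x" x])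
  also have "\<dots> \<le> (norm x)\<^sup>2"
    using norm_square_le_form[of x] zero_le_power2[of "norm (A x)"] by linarith
  finally show ?thesis by (rule power2_le_imp_le) simp
qed

lemma norm_T_pow_le: "norm ((T ^^ k) x) \<le> norm x"
  by (induction k) (auto intro: order_trans[OF norm_T_le])

lemma summable_root: "summable (\<lambda>k. sqrt_coeff k *\<^sub>R (T ^^ k) x)"
proof (rule summable_norm_cancel, rule summable_comparison_test)
  show "\<exists>N. \<forall>n\<ge>N. norm (norm (sqrt_coeff n *\<^sub>R (T ^^ n) x)) \<le> \<bar>sqrt_coeff n\<bar> * norm x"
    using norm_T_pow_le by (intro exI[of _ 0] allI impI) (simp add: mult_left_mono)
  show "summable (\<lambda>n. \<bar>sqrt_coeff n\<bar> * norm x)"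
    by (rule summable_mult2[OF summable_abs_sqrt_coeff])
qed

lemma partial_root_tendsto: "(\<lambda>N. partial_root N x) \<longlonglongrightarrow> root x"
  unfolding partial_root_def root_def by (rule summable_LIMSEQ[OF summable_root])

lemma bounded_linear_partial_root: "bounded_linear (partial_root N)"
  unfolding partial_root_def
  by (intro bounded_linear_sum bounded_linear_compose[OF bounded_linear_scaleR_right,
        unfolded o_def] bounded_linear_T_pow)

lemma norm_partial_root_le: "norm (partial_root N x) \<le> 2 * norm x"
proof -
  have "norm (partial_root N x) \<le> (\<Sum>k<N. \<bar>sqrt_coeff k\<bar> * norm x)"
    unfolding partial_root_def
    by (rule order_trans[OF norm_sum sum_mono]) (auto intro: mult_left_mono norm_T_pow_le)
  also have "\<dots> \<le> 2 * norm x"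
    by (simp add: sum_distrib_right[symmetric] mult_right_mono sum_lessThan_abs_sqrt_coeff_le)
  finally show ?thesis .
qed

lemma bounded_linear_root: "bounded_linear root"
proof (rule bounded_linear_intro[where K = 2])
  show "root (x + y) = root x + root y" for x y
    unfolding root_def
    by (simp add: suminf_add[OF summable_root summable_root] scaleR_add_right
        linear_add[OF bounded_linear.linear[OF bounded_linear_T_pow]])
  show "root (r *\<^sub>R x) = r *\<^sub>R root x" for r x
    unfolding root_def
    by (simp add: suminf_scaleR_right[OF summable_root] mult.commute
        linear_scale[OF bounded_linear.linear[OF bounded_linear_T_pow]])
  show "norm (root x) \<le> norm x * 2" for x
    using Lim_norm_ubound[OF trivial_limit_sequentially partial_root_tendsto]
      norm_partial_root_le by (simp add: mult.commute)
qed

lemma hermitian_root: "hermitian root"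
proof -
  have "cJ (root x) = root (cJ x)" for x
    unfolding root_def bounded_linear.suminf[OF bounded_linear_cJ summable_root]
    by (simp add: hermitianD(2)[OF hermitian_T_pow] cJ_scaleR)
  moreover have "inner (root x) y = inner x (root y)" for x y
    unfolding root_def bounded_linear.suminf[OF bounded_linear_inner_left summable_root]
      bounded_linear.suminf[OF bounded_linear_inner_right summable_root]
    by (simp add: hermitianD(3)[OF hermitian_T_pow])
  ultimately show ?thesis
    by (simp add: hermitian_def bounded_linear_root)
qed

text \<open>Only the constant term of the series is positive, and the coefficients sum to \<open>\<surd>0 \<ge> 0\<close>.\<close>

lemma root_nonneg: "0 \<le> inner x (root x)"
proof -
  have summable: "summable (\<lambda>k. sqrt_coeff k * inner x ((T ^^ k) x))"
    using bounded_linear.summable[OF bounded_linear_inner_right summable_root, of x x] by simp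
  have "inner x (root x) = (\<Sum>k. inner x (sqrt_coeff k *\<^sub>R (T ^^ k) x))"
    unfolding root_def by (rule bounded_linear.suminf[OF bounded_linear_inner_right summable_root])
  also have "\<dots> \<ge> (\<Sum>k. sqrt_coeff k * (norm x)\<^sup>2)"
  proof (rule suminf_le)
    fix k
    show "sqrt_coeff k * (norm x)\<^sup>2 \<le> inner x (sqrt_coeff k *\<^sub>R (T ^^ k) x)"
    proof (cases "k = 0")
      case False
      have "inner x ((T ^^ k) x) \<le> norm x * norm ((T ^^ k) x)" by (rule norm_cauchy_schwarz)
      also have "\<dots> \<le> (norm x)\<^sup>2"
        using norm_T_pow_le[of k x] by (simp add: power2_eq_square mult_left_mono)
      finally have "inner x ((T ^^ k) x) \<le> (norm x)\<^sup>2" .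
      then show ?thesis
        using sqrt_coeff_nonpos[of k] False by (simp add: mult_left_mono_neg)
    qed (simp add: power2_norm_eq_inner)
  qed (auto intro: summable_mult2 summable_sqrt_coeff simp: summable)
  also have "(\<Sum>k. sqrt_coeff k * (norm x)\<^sup>2) = suminf sqrt_coeff * (norm x)\<^sup>2"
    by (rule suminf_mult2[OF summable_sqrt_coeff, symmetric])
  finally show ?thesis
    using suminf_sqrt_coeff_nonneg by (meson order_trans zero_le_mult_iff zero_le_power2)
qed

lemma partial_root_squared:
  "partial_root N (partial_root N x)
     = (\<Sum>(i, j)\<in>{..<N} \<times> {..<N}. (sqrt_coeff i * sqrt_coeff j) *\<^sub>R (T ^^ (i + j)) x)"
  unfolding partial_root_def
  by (simp add: linear_sum[OF bounded_linear.linear[OF bounded_linear_T_pow]] scaleR_sum_right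
      linear_scale[OF bounded_linear.linear[OF bounded_linear_T_pow]] funpow_add
      sum.cartesian_product)

lemma triangle_sum_eq_A:
  assumes "N \<ge> 2"
  shows "(\<Sum>(i, j)\<in>{(i, j). i + j < N}. (sqrt_coeff i * sqrt_coeff j) *\<^sub>R (T ^^ (i + j)) x) = A x"
proof -
  have "(\<Sum>(i, j)\<in>{(i, j). i + j < N}. (sqrt_coeff i * sqrt_coeff j) *\<^sub>R (T ^^ (i + j)) x)
      = (\<Sum>k<N. (\<Sum>i\<le>k. sqrt_coeff i * sqrt_coeff (k - i)) *\<^sub>R (T ^^ k) x)"
    by (simp add: sum.triangle_reindex scaleR_sum_left)
  also have "\<dots> = (\<Sum>k<N. (if k = 0 then 1 else if k = 1 then -1 else 0) *\<^sub>R (T ^^ k) x)"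
    by (simp add: sqrt_coeff_convolution)
  also have "\<dots> = (\<Sum>k\<in>{0, 1}. (if k = 0 then 1 else if k = 1 then -1 else 0) *\<^sub>R (T ^^ k) x)"
    using assms by (intro sum.mono_neutral_right) auto
  also have "\<dots> = A x" by (simp add: T_def)
  finally show ?thesis .
qed

lemma partial_root_squared_tendsto: "(\<lambda>N. partial_root N (partial_root N x)) \<longlonglongrightarrow> root (root x)"
proof -
  have "(\<lambda>N. partial_root N (root x - partial_root N x)) \<longlonglongrightarrow> 0"
  proof (rule Lim_null_comparison)
    show "\<forall>\<^sub>F N in sequentially. norm (partial_root N (root x - partial_root N x))
            \<le> 2 * norm (root x - partial_root N x)"
      by (simp add: norm_partial_root_le)
    show "(\<lambda>N. 2 * norm (root x - partial_root N x)) \<longlonglongrightarrow> 0"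
      using tendsto_diff[OF tendsto_const partial_root_tendsto, of "root x" x]
      by (intro tendsto_mult_right_zero) (simp add: tendsto_norm_zero)
  qed
  then have "(\<lambda>N. partial_root N (root x) - partial_root N (root x - partial_root N x))
      \<longlonglongrightarrow> root (root x) - 0"
    by (intro tendsto_diff partial_root_tendsto)
  then show ?thesis
    by (simp add: linear_diff[OF bounded_linear.linear[OF bounded_linear_partial_root]])
qed

lemma root_root: "root (root x) = A x"
proof (rule LIMSEQ_unique[OF partial_root_squared_tendsto])
  let ?tail = "\<lambda>N. \<Sum>(i, j)\<in>{..<N} \<times> {..<N} - {(i, j). i + j < N}.
                 \<bar>sqrt_coeff i\<bar> * \<bar>sqrt_coeff j\<bar>"
  have "norm (partial_root N (partial_root N x) - A x) \<le> ?tail N * norm x" if "N \<ge> 2" for N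
  proof -
    have "{(i, j). i + j < N} \<subseteq> {..<N} \<times> {..<N}" by auto
    then have "partial_root N (partial_root N x) - A x
        = (\<Sum>(i, j)\<in>{..<N} \<times> {..<N} - {(i, j). i + j < N}.
             (sqrt_coeff i * sqrt_coeff j) *\<^sub>R (T ^^ (i + j)) x)"
      by (simp add: partial_root_squared triangle_sum_eq_A[OF that, symmetric] sum_diff)
    also have "norm \<dots> \<le> (\<Sum>(i, j)\<in>{..<N} \<times> {..<N} - {(i, j). i + j < N}.
                          \<bar>sqrt_coeff i\<bar> * \<bar>sqrt_coeff j\<bar> * norm x)"
      by (rule order_trans[OF norm_sum sum_mono])
        (auto simp: abs_mult intro!: mult_left_mono norm_T_pow_le)
    also have "\<dots> = ?tail N * norm x"
      by (simp add: sum_distrib_right case_prod_beta)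
    finally show ?thesis .
  qed
  then have "\<forall>\<^sub>F N in sequentially. norm (partial_root N (partial_root N x) - A x) \<le> ?tail N * norm x"
    by (auto simp: eventually_sequentially)
  moreover have "(\<lambda>N. ?tail N * norm x) \<longlonglongrightarrow> 0"
    by (intro tendsto_mult_left_zero square_minus_triangle_sum_tendsto_0 summable_abs_sqrt_coeff)
  ultimately have "(\<lambda>N. partial_root N (partial_root N x) - A x) \<longlonglongrightarrow> 0"
    by (rule Lim_null_comparison)
  then show "(\<lambda>N. partial_root N (partial_root N x)) \<longlonglongrightarrow> A x"
    by (rule LIM_zero_cancel)
qed

text \<open>
  A positive square root \<open>C\<close> of \<open>A\<close> commutes with \<open>A\<close>, hence with the series \<open>root\<close>;
  then \<open>y = root x - C x\<close> satisfies \<open>(root + C) y = A x - A x = 0\<close>, and positivity of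
  both roots forces \<open>root y = C y = 0\<close>, so \<open>\<parallel>y\<parallel>\<^sup>2 = \<langle>x, root y - C y\<rangle> = 0\<close>.
\<close>

lemma positive_root_unique:
  assumes C: "hermitian C" and C_nonneg: "\<And>x. 0 \<le> inner x (C x)" and CC: "\<And>x. C (C x) = A x"
  shows "C = root"
proof
  fix x
  interpret C: bounded_linear C by (rule hermitianD(1)[OF C])
  interpret root: bounded_linear root by (rule bounded_linear_root)
  have "C (A y) = A (C y)" for y
    by (metis CC)
  then have "C (T y) = T (C y)" for y
    by (simp add: T_def C.diff)
  then have "C ((T ^^ k) y) = (T ^^ k) (C y)" for k y
    by (induction k) simp_all
  then have C_root: "C (root y) = root (C y)" for y
    unfolding root_def by (simp add: C.suminf[OF summable_root] C.scaleR)
  define y where "y = root x - C x"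
  have "root y + C y = 0"
    by (simp add: y_def root.diff C.diff root_root CC C_root)
  then have "inner y (root y) + inner y (C y) = 0"
    by (metis inner_add_right inner_zero_right)
  then have "inner y (root y) = 0" "inner y (C y) = 0"
    using root_nonneg[of y] C_nonneg[of y] by linarith+
  then have "root y = 0" "C y = 0"
    by (auto intro: hermitian_nonneg_form_eq_0 hermitian_root root_nonneg C C_nonneg)
  then have "inner y y = 0"
    by (simp add: y_def inner_diff_left hermitianD(3)[OF hermitian_root] hermitianD(3)[OF C])
  then show "C x = root x" by (simp add: y_def)
qed

lemma ex1_positive_root: "\<exists>!C. bounded_self_adjoint C \<and> op_ge UNIV C 0 \<and> (\<forall>x. C (C x) = A x)"
proof (rule ex1I[where a = root])
  show "bounded_self_adjoint root \<and> op_ge UNIV root 0 \<and> (\<forall>x. root (root x) = A x)"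
    using hermitian_root root_nonneg root_root
    by (simp add: bounded_self_adjoint_iff_hermitian op_ge_def)
qed (use positive_root_unique in \<open>simp add: bounded_self_adjoint_iff_hermitian op_ge_def\<close>)

lemma
  shows hermitian_pos_sqrt: "hermitian (pos_sqrt A)"
    and pos_sqrt_nonneg: "0 \<le> inner x (pos_sqrt A x)"
    and pos_sqrt_pos_sqrt: "pos_sqrt A (pos_sqrt A x) = A x"
  using theI'[OF ex1_positive_root]
  by (simp_all add: pos_sqrt_def bounded_self_adjoint_iff_hermitian op_ge_def)

end

section \<open>The projection theorem\<close>

lemma parallelogram_midpoint:
  fixes y v w :: "'a::real_inner"
  shows "(norm (v - w))\<^sup>2 = 2 * (norm (y - v))\<^sup>2 + 2 * (norm (y - w))\<^sup>2
           - 4 * (norm (y - (1/2) *\<^sub>R (v + w)))\<^sup>2"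
  unfolding power2_norm_eq_inner
  by (simp add: inner_diff_left inner_diff_right inner_add_left inner_add_right
      inner_commute algebra_simps)

lemma closed_subspace_nearest_point:
  fixes V :: "'a::{real_inner, complete_space} set"
  assumes V: "subspace V" "closed V"
  obtains p where "p \<in> V" "\<And>v. v \<in> V \<Longrightarrow> norm (y - p) \<le> norm (y - v)"
proof -
  define d where "d = (INF v\<in>V. (norm (y - v))\<^sup>2)"
  have bdd: "bdd_below ((\<lambda>v. (norm (y - v))\<^sup>2) ` V)"
    by (rule bdd_belowI[where m = 0]) auto
  have d_le: "d \<le> (norm (y - v))\<^sup>2" if "v \<in> V" for v
    unfolding d_def by (rule cINF_lower[OF bdd that])
  have "V \<noteq> {}" using V(1) subspace_0 by blast
  have "\<exists>v. v \<in> V \<and> (norm (y - v))\<^sup>2 < d + 1 / Suc n" for n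
  proof -
    have "d < d + 1 / Suc n" by simp
    then show ?thesis using cINF_less_iff[OF \<open>V \<noteq> {}\<close> bdd] unfolding d_def by blast
  qed
  then obtain v where "\<forall>n. v n \<in> V \<and> (norm (y - v n))\<^sup>2 < d + 1 / Suc n"
    using choice[of "\<lambda>n v. v \<in> V \<and> (norm (y - v))\<^sup>2 < d + 1 / Suc n"] by blast
  then have v: "\<And>n. v n \<in> V" "\<And>n. (norm (y - v n))\<^sup>2 < d + 1 / Suc n" by simp_all
  have v_close: "(dist (v m) (v n))\<^sup>2 \<le> 2 * (1 / Suc m) + 2 * (1 / Suc n)" for m n
  proof -
    have "(1/2) *\<^sub>R (v m + v n) \<in> V"
      using V(1) v(1) by (simp add: subspace_add subspace_mul)
    then have "d \<le> (norm (y - (1/2) *\<^sub>R (v m + v n)))\<^sup>2" by (rule d_le)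
    then show ?thesis
      using parallelogram_midpoint[of "v m" "v n" y] v(2)[of m] v(2)[of n]
      unfolding dist_norm by linarith
  qed
  have "Cauchy v"
  proof (rule metric_CauchyI)
    fix e :: real
    assume "e > 0"
    obtain N where "4 / e\<^sup>2 < real N"
      using reals_Archimedean2 by blast
    then have N: "4 / e\<^sup>2 < Suc N" by simp
    have "dist (v m) (v n) < e" if "m \<ge> N" "n \<ge> N" for m n
    proof -
      have "1 / real (Suc m) \<le> 1 / Suc N" "1 / real (Suc n) \<le> 1 / Suc N"
        using that by (simp_all add: frac_le)
      moreover have "4 * (1 / real (Suc N)) < e\<^sup>2"
        using N \<open>e > 0\<close> by (simp add: field_simps)
      ultimately have "(dist (v m) (v n))\<^sup>2 < e\<^sup>2"
        using v_close[of m n] by linarith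
      then show ?thesis
        by (rule power_less_imp_less_base) (use \<open>e > 0\<close> in simp)
    qed
    then show "\<exists>M. \<forall>m\<ge>M. \<forall>n\<ge>M. dist (v m) (v n) < e" by blast
  qed
  then obtain p where lim: "v \<longlonglongrightarrow> p"
    using Cauchy_convergent_iff convergent_def by blast
  have "p \<in> V" by (rule closed_sequentially[OF V(2) v(1) lim])
  moreover have p: "(norm (y - p))\<^sup>2 \<le> d"
  proof (rule tendsto_le[OF trivial_limit_sequentially])
    show "(\<lambda>n. d + 1 / Suc n) \<longlonglongrightarrow> d"
      using tendsto_add[OF tendsto_const[of d] LIMSEQ_inverse_real_of_nat]
      by (simp add: inverse_eq_divide)
    show "(\<lambda>n. (norm (y - v n))\<^sup>2) \<longlonglongrightarrow> (norm (y - p))\<^sup>2"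
      by (intro tendsto_intros lim)
  qed (use v(2) in \<open>simp add: less_imp_le\<close>)
  moreover have "norm (y - p) \<le> norm (y - w)" if "w \<in> V" for w
  proof (rule power2_le_imp_le)
    show "(norm (y - p))\<^sup>2 \<le> (norm (y - w))\<^sup>2" using p d_le[OF that] by linarith
  qed simp
  ultimately show ?thesis using that by blast
qed

lemma nearest_point_orthogonal:
  fixes V :: "'a::real_inner set"
  assumes V: "subspace V" and p: "p \<in> V" "\<And>v. v \<in> V \<Longrightarrow> norm (y - p) \<le> norm (y - v)"
    and w: "w \<in> V"
  shows "inner (y - p) w = 0"
proof (cases "w = 0")
  case False
  define a b t where "a = inner (y - p) w" and "b = inner w w" and "t = a / b"
  have b: "b > 0" using False by (simp add: b_def)
  have "p + t *\<^sub>R w \<in> V" using V p(1) w by (simp add: subspace_add subspace_mul)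
  then have "norm (y - p) \<le> norm ((y - p) - t *\<^sub>R w)"
    using p(2) by (simp add: diff_diff_eq)
  then have "(norm (y - p))\<^sup>2 \<le> (norm ((y - p) - t *\<^sub>R w))\<^sup>2"
    by (rule power_mono) simp
  also have "\<dots> = (norm (y - p))\<^sup>2 - 2 * (t * a) + t\<^sup>2 * b"
    unfolding power2_norm_eq_inner
    by (simp add: inner_diff_left inner_diff_right inner_commute[of w y] inner_commute[of w p]
        a_def b_def power2_eq_square algebra_simps)
  finally have "(norm (y - p))\<^sup>2 \<le> (norm (y - p))\<^sup>2 - 2 * (t * a) + t\<^sup>2 * b" .
  moreover have "t * a = a\<^sup>2 / b" "t\<^sup>2 * b = a\<^sup>2 / b"
    using b by (simp_all add: t_def power2_eq_square)
  ultimately have "a\<^sup>2 / b \<le> 0" by linarith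
  then show ?thesis using b by (simp add: a_def divide_le_0_iff)
qed simp

section \<open>The operators \<open>H\<^sup>-\<^sup>1\<close> and \<open>H\<^sup>-\<^sup>1\<^sup>/\<^sup>2\<close>\<close>

locale self_adjoint_ge_one =
  fixes DH :: "'a::complex_hilbert set" and H :: "'a \<Rightarrow> 'a"
  assumes self_adjoint: "self_adjoint_op DH H" and ge_one: "op_ge DH H 1"
begin

lemma hsubspace_dom: "hsubspace DH"
  and H_add: "x \<in> DH \<Longrightarrow> y \<in> DH \<Longrightarrow> H (x + y) = H x + H y"
  and H_hscaleC: "x \<in> DH \<Longrightarrow> H (hscaleC c x) = hscaleC c (H x)"
  using self_adjoint by (simp_all add: self_adjoint_op_def hlinear_on_def)

lemma dom_add: "x \<in> DH \<Longrightarrow> y \<in> DH \<Longrightarrow> x + y \<in> DH"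
  and dom_hscaleC: "x \<in> DH \<Longrightarrow> hscaleC c x \<in> DH"
  and dom_diff: "x \<in> DH \<Longrightarrow> y \<in> DH \<Longrightarrow> x - y \<in> DH"
  using hsubspace_dom hsubspace_diff by (auto simp: hsubspace_def)

lemma dom_scaleR: "x \<in> DH \<Longrightarrow> r *\<^sub>R x \<in> DH"
  and dom_cJ: "x \<in> DH \<Longrightarrow> cJ x \<in> DH"
  and H_scaleR: "x \<in> DH \<Longrightarrow> H (r *\<^sub>R x) = r *\<^sub>R H x"
  and H_cJ: "x \<in> DH \<Longrightarrow> H (cJ x) = cJ (H x)"
  using dom_hscaleC[of x] H_hscaleC[of x] by (simp_all flip: hscaleC_of_real hscaleC_ii)

lemma H_diff:
  assumes "x \<in> DH" "y \<in> DH"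
  shows "H (x - y) = H x - H y"
proof -
  have "H x = H ((x - y) + y)" by simp
  also have "\<dots> = H (x - y) + H y" using H_add[OF dom_diff[OF assms] assms(2)] .
  finally show ?thesis by simp
qed

lemma self_adjoint_iff: "(\<forall>x\<in>DH. hinner (H x) y = hinner x z) \<longleftrightarrow> y \<in> DH \<and> H y = z"
  using self_adjoint by (simp add: self_adjoint_op_def)

lemma H_symmetric: "x \<in> DH \<Longrightarrow> y \<in> DH \<Longrightarrow> hinner (H x) y = hinner x (H y)"
  using self_adjoint_iff[of y "H y"] by blast

lemma norm_square_le_form: "x \<in> DH \<Longrightarrow> (norm x)\<^sup>2 \<le> inner x (H x)"
  using ge_one by (simp add: op_ge_def)

lemma norm_le_norm_H:
  assumes "x \<in> DH"
  shows "norm x \<le> norm (H x)"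
proof (cases "x = 0")
  case False
  have "norm x * norm x \<le> norm x * norm (H x)"
    using order_trans[OF norm_square_le_form[OF assms] norm_cauchy_schwarz[of x "H x"]]
    by (simp add: power2_eq_square)
  then show ?thesis using False by (simp add: mult_le_cancel_left_pos)
qed simp

lemma H_inj:
  assumes "x \<in> DH" "y \<in> DH" "H x = H y"
  shows "x = y"
  using norm_le_norm_H[OF dom_diff[OF assms(1,2)]] by (simp add: H_diff assms)

lemma closed_range: "closed (H ` DH)"
  unfolding closed_sequential_limits
proof (intro allI impI)
  fix z l
  assume "(\<forall>n. z n \<in> H ` DH) \<and> z \<longlonglongrightarrow> l"
  then have "\<forall>n. \<exists>x. x \<in> DH \<and> z n = H x" and lim: "z \<longlonglongrightarrow> l" by auto
  then obtain x where "\<forall>n. x n \<in> DH \<and> z n = H (x n)"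
    using choice[of "\<lambda>n x. x \<in> DH \<and> z n = H x"] by blast
  then have x: "\<And>n. x n \<in> DH" and z: "z = (\<lambda>n. H (x n))" by auto
  have "Cauchy x"
  proof (rule metric_CauchyI)
    fix e :: real
    assume "e > 0"
    then obtain M where "\<forall>m\<ge>M. \<forall>n\<ge>M. dist (z m) (z n) < e"
      using LIMSEQ_imp_Cauchy[OF lim] metric_CauchyD by blast
    moreover have "dist (x m) (x n) \<le> dist (z m) (z n)" for m n
      using norm_le_norm_H[OF dom_diff[OF x x]] by (simp add: dist_norm z H_diff x)
    ultimately show "\<exists>M. \<forall>m\<ge>M. \<forall>n\<ge>M. dist (x m) (x n) < e"
      by (meson le_less_trans)
  qed
  then obtain x0 where x0: "x \<longlonglongrightarrow> x0"
    using Cauchy_convergent_iff convergent_def by blast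
  have "hinner (H w) x0 = hinner w l" if "w \<in> DH" for w
  proof (rule LIMSEQ_unique)
    show "(\<lambda>n. hinner (H w) (x n)) \<longlonglongrightarrow> hinner (H w) x0"
      by (intro tendsto_intros x0)
    show "(\<lambda>n. hinner (H w) (x n)) \<longlonglongrightarrow> hinner w l"
      using lim by (simp add: H_symmetric[OF that x] z) (intro tendsto_intros)
  qed
  then show "l \<in> H ` DH" using self_adjoint_iff[of x0 l] by blast
qed

text \<open>The range of \<open>H\<close> is closed, and its orthogonal complement lies in the kernel of \<open>H\<close>.\<close>

lemma H_surj: "\<exists>x\<in>DH. H x = y"
proof -
  have sub: "subspace (H ` DH)"
    unfolding subspace_def
  proof (intro conjI ballI allI)
    have "0 \<in> DH" using hsubspace_dom by (simp add: hsubspace_def)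
    moreover from this have "0 = H 0" using H_scaleR[of 0 0] by simp
    ultimately show "0 \<in> H ` DH" by (rule rev_image_eqI)
    show "a + b \<in> H ` DH" if a: "a \<in> H ` DH" and b: "b \<in> H ` DH" for a b
    proof -
      obtain a' b' where "a' \<in> DH" "b' \<in> DH" "a = H a'" "b = H b'" using a b by blast
      then have "a + b = H (a' + b')" "a' + b' \<in> DH" using dom_add H_add by simp_all
      then show ?thesis by (rule image_eqI)
    qed
    show "r *\<^sub>R a \<in> H ` DH" if a: "a \<in> H ` DH" for r a
    proof -
      obtain a' where "a' \<in> DH" "a = H a'" using a by blast
      then have "r *\<^sub>R a = H (r *\<^sub>R a')" "r *\<^sub>R a' \<in> DH" using dom_scaleR H_scaleR by simp_all
      then show ?thesis by (rule image_eqI)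
    qed
  qed
  obtain p where p: "p \<in> H ` DH" "\<And>v. v \<in> H ` DH \<Longrightarrow> norm (y - p) \<le> norm (y - v)"
    using closed_subspace_nearest_point[OF sub closed_range] by blast
  have "hinner (H w) (y - p) = hinner w 0" if "w \<in> DH" for w
  proof -
    have "H w \<in> H ` DH" "cJ (H w) \<in> H ` DH"
      using that dom_cJ H_cJ by (metis image_eqI)+
    then show ?thesis
      using nearest_point_orthogonal[OF sub p] by (simp add: complex_eq_iff inner_commute)
  qed
  then have "y - p \<in> DH" "H (y - p) = 0"
    using self_adjoint_iff[of "y - p" 0] by auto
  then show ?thesis
    using p(1) norm_le_norm_H[of "y - p"] by auto
qed

definition A :: "'a \<Rightarrow> 'a" where "A = op_inv DH H"

lemma ex1_preimage: "\<exists>!x. x \<in> DH \<and> H x = y"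
  using H_surj H_inj by blast

lemma A_in_dom: "A y \<in> DH" and H_A: "H (A y) = y"
  using theI'[OF ex1_preimage[of y]] by (simp_all add: A_def op_inv_def)

lemma A_eqI: "x \<in> DH \<Longrightarrow> H x = y \<Longrightarrow> A y = x"
  using ex1_preimage[of y] A_in_dom H_A by blast

lemma hermitian_A: "hermitian A"
proof -
  have "bounded_linear A"
  proof (rule bounded_linear_intro[where K = 1])
    show "A (x + y) = A x + A y" for x y
      by (rule A_eqI) (simp_all add: dom_add A_in_dom H_add H_A)
    show "A (r *\<^sub>R x) = r *\<^sub>R A x" for r x
      by (rule A_eqI) (simp_all add: dom_scaleR A_in_dom H_scaleR H_A)
    show "norm (A x) \<le> norm x * 1" for x
      using norm_le_norm_H[OF A_in_dom] by (simp add: H_A)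
  qed
  moreover have "A (cJ x) = cJ (A x)" for x
    by (rule A_eqI) (simp_all add: dom_cJ A_in_dom H_cJ H_A)
  moreover have "inner (A x) y = inner x (A y)" for x y
  proof -
    have "inner (A x) y = Re (hinner (A x) (H (A y)))" by (simp add: H_A)
    also have "\<dots> = Re (hinner (H (A x)) (A y))" by (simp add: H_symmetric A_in_dom)
    also have "\<dots> = inner x (A y)" by (simp add: H_A)
    finally show ?thesis .
  qed
  ultimately show ?thesis by (simp add: hermitian_def)
qed

lemma norm_square_A_le: "(norm (A y))\<^sup>2 \<le> inner y (A y)"
  using norm_square_le_form[OF A_in_dom[of y]] by (simp add: H_A inner_commute)

sublocale inverse: positive_contraction A
  by unfold_locales (fact hermitian_A, fact norm_square_A_le)

abbreviation R :: "'a \<Rightarrow> 'a" where "R \<equiv> Hmhalf DH H"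

lemma hermitian_R: "hermitian R"
  and R_R: "R (R x) = A x"
  using inverse.hermitian_pos_sqrt inverse.pos_sqrt_pos_sqrt
  by (simp_all add: Hmhalf_def A_def)

lemmas bounded_linear_R = hermitianD(1)[OF hermitian_R]

lemma R_inj:
  assumes "R x = R y"
  shows "x = y"
proof -
  have "A x = A y" by (metis R_R assms)
  then show ?thesis by (metis H_A)
qed

lemma norm_R_le: "norm (R x) \<le> norm x"
proof -
  have "(norm (R x))\<^sup>2 = inner x (A x)"
    by (simp add: power2_norm_eq_inner hermitianD(3)[OF hermitian_R] R_R)
  also have "\<dots> \<le> norm x * norm (A x)" by (rule norm_cauchy_schwarz)
  also have "\<dots> \<le> (norm x)\<^sup>2"
    using norm_le_norm_H[OF A_in_dom, of x] by (simp add: H_A power2_eq_square mult_left_mono)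
  finally show ?thesis by (rule power2_le_imp_le) simp
qed

lemma Hhalf_R: "Hhalf DH H (R u) = u"
  unfolding Hhalf_def by (intro the_equality) (auto dest: R_inj)

lemma hform_R: "hform DH H (R u) (R v) = hinner u v"
  by (simp add: hform_def Hhalf_R)

lemma Hmpow_eq: "Hmpow DH H n = R ^^ n"
  by (simp add: Hmpow_def)

end

section \<open>Conjugating \<open>F\<close> by \<open>H\<^sup>1\<^sup>/\<^sup>2\<close>\<close>

lemma dense_continuous_le:
  fixes f g :: "'b::topological_space \<Rightarrow> 'c::linorder_topology"
  assumes "closure S = UNIV" "continuous_on UNIV f" "continuous_on UNIV g"
    and "\<And>s. s \<in> S \<Longrightarrow> f s \<le> g s"
  shows "f x \<le> g x"
proof -
  have "closure S \<subseteq> {x. f x \<le> g x}"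
    using assms(4) by (intro closure_minimal closed_Collect_le assms(2,3)) auto
  then show ?thesis using assms(1) by auto
qed

lemma dense_continuous_eq:
  fixes f g :: "'b::topological_space \<Rightarrow> 'c::t2_space"
  assumes "closure S = UNIV" "continuous_on UNIV f" "continuous_on UNIV g"
    and "\<And>s. s \<in> S \<Longrightarrow> f s = g s"
  shows "f x = g x"
proof -
  have "closure S \<subseteq> {x. f x = g x}"
    using assms(4) by (intro closure_minimal closed_Collect_eq assms(2,3)) auto
  then show ?thesis using assms(1) by auto
qed

locale form_bounded_conjugation = self_adjoint_ge_one DH H
  for DH :: "'a::complex_hilbert set" and H :: "'a \<Rightarrow> 'a" +
  fixes F :: "'a \<Rightarrow> 'a" and \<D> :: "'a set" and cF :: real
  assumes hermitian_F: "hermitian F"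
    and core: "form_core DH H \<D>"
    and F_core: "F ` \<D> \<subseteq> form_dom DH H"
    and cF_pos: "cF > 0"
    and form_F_le: "\<And>\<psi>. \<psi> \<in> \<D> \<Longrightarrow> Re (hform DH H (F \<psi>) (F \<psi>)) \<le> cF * Re (hform DH H \<psi> \<psi>)"
begin

lemmas bounded_linear_F = hermitianD(1)[OF hermitian_F]

interpretation R: bounded_linear R by (rule bounded_linear_R)
interpretation F: bounded_linear F by (rule bounded_linear_F)

definition pre_core :: "'a set" where "pre_core = {u. R u \<in> \<D>}"

lemma pre_core_diff: "s \<in> pre_core \<Longrightarrow> s' \<in> pre_core \<Longrightarrow> s - s' \<in> pre_core"
  using hsubspace_diff[of \<D> "R s" "R s'"] core by (simp add: pre_core_def form_core_def R.diff)

text \<open>The form norm of \<open>R u\<close> dominates \<open>\<parallel>u\<parallel>\<close>, so \<open>R\<close> pulls the form core back to a dense set.\<close>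

lemma closure_pre_core: "closure pre_core = UNIV"
proof -
  have "\<exists>s\<in>pre_core. dist s u < e" if "e > 0" for u e
  proof -
    obtain \<psi> where \<psi>: "\<psi> \<in> \<D>" "form_norm DH H (R u - \<psi>) < e"
      using core \<open>e > 0\<close> unfolding form_core_def form_dom_def by blast
    then obtain s where s: "\<psi> = R s"
      using core by (auto simp: form_core_def form_dom_def)
    have "norm (u - s) \<le> form_norm DH H (R u - \<psi>)"
      by (simp add: form_norm_def s flip: R.diff) (simp add: hform_R hinner_self real_le_rsqrt)
    with \<psi> s show ?thesis
      by (intro bexI[of _ s]) (auto simp: pre_core_def dist_norm norm_minus_commute)
  qed
  then show ?thesis
    by (auto simp: closure_approachable)
qed

definition conj_core :: "'a \<Rightarrow> 'a" where "conj_core s = Hhalf DH H (F (R s))"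

lemma R_conj_core: "s \<in> pre_core \<Longrightarrow> R (conj_core s) = F (R s)"
  using F_core by (auto simp: pre_core_def form_dom_def conj_core_def Hhalf_R)

lemma norm_conj_core_le:
  assumes "s \<in> pre_core"
  shows "norm (conj_core s) \<le> sqrt cF * norm s"
proof -
  have "(norm (conj_core s))\<^sup>2 \<le> cF * (norm s)\<^sup>2"
    using form_F_le[of "R s"] assms
    by (simp add: pre_core_def R_conj_core[symmetric] hform_R hinner_self)
  then have "norm (conj_core s) \<le> sqrt (cF * (norm s)\<^sup>2)" by (rule real_le_rsqrt)
  then show ?thesis by (simp add: real_sqrt_mult)
qed

lemma conj_core_diff:
  "s \<in> pre_core \<Longrightarrow> s' \<in> pre_core \<Longrightarrow> conj_core (s - s') = conj_core s - conj_core s'"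
  by (rule R_inj) (simp add: R_conj_core pre_core_diff R.diff F.diff)

lemma uniformly_continuous_conj_core: "uniformly_continuous_on pre_core conj_core"
  unfolding uniformly_continuous_on_def
proof (intro allI impI)
  fix e :: real
  assume "e > 0"
  show "\<exists>d>0. \<forall>x\<in>pre_core. \<forall>x'\<in>pre_core. dist x' x < d \<longrightarrow> dist (conj_core x') (conj_core x) < e"
  proof (intro exI[of _ "e / (sqrt cF + 1)"] conjI ballI impI)
    fix x x' assume x: "x \<in> pre_core" "x' \<in> pre_core" and "dist x' x < e / (sqrt cF + 1)"
    then have "sqrt cF * dist x' x \<le> sqrt cF * (e / (sqrt cF + 1))"
      using cF_pos by (intro mult_left_mono less_imp_le) simp_all
    also have "\<dots> < e"
      using \<open>e > 0\<close> cF_pos by (simp add: field_simps add_pos_pos)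
    finally show "dist (conj_core x') (conj_core x) < e"
      using norm_conj_core_le[OF pre_core_diff[OF x(2,1)]]
      by (simp add: dist_norm conj_core_diff x)
  qed (use \<open>e > 0\<close> cF_pos in \<open>simp add: add_nonneg_pos\<close>)
qed

lemma ex_conjugate: "\<exists>G. bounded_linear G \<and> (\<forall>u. R (G u) = F (R u))"
proof -
  obtain G where "uniformly_continuous_on (closure pre_core) G"
    and G: "\<And>s. s \<in> pre_core \<Longrightarrow> conj_core s = G s"
    using uniformly_continuous_on_extension_on_closure[OF uniformly_continuous_conj_core] by metis
  then have cont: "continuous_on UNIV G"
    using closure_pre_core uniformly_continuous_imp_continuous by fastforce
  have RG: "R (G u) = F (R u)" for u
    by (rule dense_continuous_eq[OF closure_pre_core, where f = "\<lambda>u. R (G u)" and g = "\<lambda>u. F (R u)"])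
      (simp_all add: R.continuous_on[OF cont] F.continuous_on[OF R.continuous_on[OF continuous_on_id]]
        R_conj_core flip: G)
  have "bounded_linear G"
  proof (rule bounded_linear_intro[where K = "sqrt cF"])
    show "G (x + y) = G x + G y" for x y
      by (rule R_inj) (simp only: RG R.add F.add)
    show "G (r *\<^sub>R x) = r *\<^sub>R G x" for r x
      by (rule R_inj) (simp only: RG R.scaleR F.scaleR)
    show "norm (G x) \<le> norm x * sqrt cF" for x
    proof (rule dense_continuous_le[OF closure_pre_core, where f = "\<lambda>x. norm (G x)"
          and g = "\<lambda>x. norm x * sqrt cF"])
      show "continuous_on UNIV (\<lambda>x. norm (G x))" by (rule continuous_on_norm[OF cont])
      show "norm (G s) \<le> norm s * sqrt cF" if "s \<in> pre_core" for s
        using norm_conj_core_le[OF that] G[OF that] by (simp add: mult.commute)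
    qed (intro continuous_intros)
  qed
  with RG show ?thesis by blast
qed

definition G :: "'a \<Rightarrow> 'a" where
  "G = (SOME G. bounded_linear G \<and> (\<forall>u. R (G u) = F (R u)))"

lemma bounded_linear_G: "bounded_linear G" and R_G: "R (G u) = F (R u)"
  using someI_ex[OF ex_conjugate] by (simp_all add: G_def)

lemma bounded_linear_G_pow: "bounded_linear (G ^^ n)"
  by (induction n) (simp_all add: id_def bounded_linear_ident
      bounded_linear_compose[OF bounded_linear_G, unfolded o_def])

lemma G_pow_scaleR: "(G ^^ n) (r *\<^sub>R u) = r *\<^sub>R (G ^^ n) u"
  by (rule linear_scale[OF bounded_linear.linear[OF bounded_linear_G_pow]])

lemma F_pow_R: "(F ^^ n) (R u) = R ((G ^^ n) u)"
  by (induction n) (simp_all add: R_G)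

end

text \<open>AM-GM with a free scaling parameter, up to an arbitrarily small error.\<close>

lemma le_2_mult_if_le_scaled_squares:
  fixes p K q r :: real
  assumes K: "K \<ge> 0" and q: "q \<ge> 0" and r: "r \<ge> 0"
    and le: "\<And>t. t > 0 \<Longrightarrow> p \<le> K * (t\<^sup>2 * q\<^sup>2 + r\<^sup>2 / t\<^sup>2)"
  shows "p \<le> 2 * K * q * r"
proof (rule field_le_epsilon)
  fix e :: real
  assume "e > 0"
  define s where "s = K * (q + r)"
  have s: "s \<ge> 0" using K q r by (simp add: s_def)
  define \<delta> where "\<delta> = e / (s + 1)"
  have "s * \<delta> = e * (s / (s + 1))" by (simp add: \<delta>_def)
  also have "\<dots> \<le> e" using s \<open>e > 0\<close> by (intro mult_left_le) simp_all
  finally have \<delta>: "\<delta> > 0" "K * (q + r) * \<delta> \<le> e"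
    using s \<open>e > 0\<close> by (simp_all add: \<delta>_def s_def)
  define t where "t = sqrt ((r + \<delta>) / (q + \<delta>))"
  have t: "t > 0" "t\<^sup>2 = (r + \<delta>) / (q + \<delta>)"
    using q r \<delta> by (simp_all add: t_def)
  have qd: "q + \<delta> > 0" and rd: "r + \<delta> > 0" using q r \<delta> by simp_all
  have "t\<^sup>2 * q\<^sup>2 = (r + \<delta>) * q * (q / (q + \<delta>))"
    unfolding t(2) using qd by (simp add: power2_eq_square field_simps)
  also have "\<dots> \<le> (r + \<delta>) * q"
    using q r \<delta> by (intro mult_left_le) simp_all
  finally have 1: "t\<^sup>2 * q\<^sup>2 \<le> (r + \<delta>) * q" .
  have "r\<^sup>2 / t\<^sup>2 = r * (q + \<delta>) * (r / (r + \<delta>))"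
    unfolding t(2) using qd rd by (simp add: power2_eq_square field_simps)
  also have "\<dots> \<le> r * (q + \<delta>)"
    using q r \<delta> by (intro mult_left_le) simp_all
  finally have 2: "r\<^sup>2 / t\<^sup>2 \<le> r * (q + \<delta>)" .
  have "p \<le> K * ((r + \<delta>) * q + r * (q + \<delta>))"
    using le[OF t(1)] 1 2 K by (smt (verit) mult_left_mono)
  also have "\<dots> = 2 * K * q * r + K * (q + r) * \<delta>"
    by (simp add: algebra_simps)
  finally show "p \<le> 2 * K * q * r + e" using \<delta>(2) by linarith
qed

lemma enat_less_if_le: "enat n < m \<Longrightarrow> k \<le> n \<Longrightarrow> enat k < m"
  by (meson enat_ord_simps(1) le_less_trans)

locale commutator_bounds = form_bounded_conjugation DH H F \<D> cF
  for DH :: "'a::complex_hilbert set" and H F \<D> cF +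
  fixes c :: real and m :: enat and cs :: "nat \<Rightarrow> real"
  assumes c_ge_1: "c \<ge> 1"
    and form_F_squared_le: "\<And>\<psi>. \<psi> \<in> \<D> \<Longrightarrow> Re (hinner \<psi> (F (F \<psi>))) \<le> c\<^sup>2 * Re (hform DH H \<psi> \<psi>)"
    and cs_ge_1: "\<And>n. 1 \<le> n \<Longrightarrow> enat n < m \<Longrightarrow> cs n \<ge> 1"
    and commutator_le: "\<And>n \<phi>1 \<phi>2. 1 \<le> n \<Longrightarrow> enat n < m \<Longrightarrow> \<phi>1 \<in> \<D> \<Longrightarrow> \<phi>2 \<in> \<D> \<Longrightarrow>
          cmod (hform DH H \<phi>1 ((F ^^ n) \<phi>2) - hform DH H ((F ^^ n) \<phi>1) \<phi>2)
            \<le> cs n * (Re (hform DH H \<phi>1 \<phi>1)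
                 + Re (hform DH H ((F ^^ (n - 1)) \<phi>2) ((F ^^ (n - 1)) \<phi>2)))"
begin

interpretation R: bounded_linear R by (rule bounded_linear_R)
interpretation F: bounded_linear F by (rule bounded_linear_F)

lemma norm_F_R_le: "norm (F (R u)) \<le> c * norm u"
proof (rule dense_continuous_le[OF closure_pre_core, where f = "\<lambda>u. norm (F (R u))"
      and g = "\<lambda>u. c * norm u"])
  show "continuous_on UNIV (\<lambda>u. norm (F (R u)))"
    by (intro continuous_on_norm F.continuous_on R.continuous_on continuous_on_id)
  fix s
  assume "s \<in> pre_core"
  then have "(norm (F (R s)))\<^sup>2 \<le> (c * norm s)\<^sup>2"
    using form_F_squared_le[of "R s"]
    by (simp add: pre_core_def hform_R hinner_self power2_norm_eq_inner power_mult_distrib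
        flip: hermitianD(3)[OF hermitian_F])
  then show "norm (F (R s)) \<le> c * norm s"
    by (rule power2_le_imp_le) (use c_ge_1 in simp)
qed (intro continuous_intros)

lemma norm_R_F_le: "norm (R (F w)) \<le> c * norm w"
proof (cases "R (F w) = 0")
  case False
  have "(norm (R (F w)))\<^sup>2 = inner w (F (R (R (F w))))"
    by (simp add: power2_norm_eq_inner hermitianD(3)[OF hermitian_R] hermitianD(3)[OF hermitian_F])
  also have "\<dots> \<le> norm w * norm (F (R (R (F w))))" by (rule norm_cauchy_schwarz)
  also have "\<dots> \<le> norm w * (c * norm (R (F w)))" by (intro mult_left_mono norm_F_R_le) simp
  finally have "norm (R (F w)) * norm (R (F w)) \<le> norm (R (F w)) * (c * norm w)"
    by (simp add: power2_eq_square algebra_simps)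
  then show ?thesis using False by (simp add: mult_le_cancel_left_pos)
qed (use c_ge_1 in simp)

lemma G_pow_commutator_le:
  assumes "1 \<le> n" "enat n < m"
  shows "cmod (hinner u1 ((G ^^ n) u2) - hinner ((G ^^ n) u1) u2)
           \<le> cs n * ((norm u1)\<^sup>2 + (norm ((G ^^ (n - 1)) u2))\<^sup>2)"
proof -
  let ?f = "\<lambda>p. cmod (hinner (fst p) ((G ^^ n) (snd p)) - hinner ((G ^^ n) (fst p)) (snd p))"
  let ?g = "\<lambda>p. cs n * ((norm (fst p))\<^sup>2 + (norm ((G ^^ (n - 1)) (snd p)))\<^sup>2)"
  have "?f (u1, u2) \<le> ?g (u1, u2)"
  proof (rule dense_continuous_le[where S = "pre_core \<times> pre_core"])
    show "closure (pre_core \<times> pre_core) = UNIV" by (simp add: closure_Times closure_pre_core)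
    show "continuous_on UNIV ?f" "continuous_on UNIV ?g"
      by (intro continuous_intros bounded_linear.continuous_on[OF bounded_linear_G_pow]
          continuous_on_fst continuous_on_snd continuous_on_id)+
    show "?f p \<le> ?g p" if "p \<in> pre_core \<times> pre_core" for p
      using that commutator_le[OF assms, of "R (fst p)" "R (snd p)"]
      by (auto simp: pre_core_def F_pow_R hform_R hinner_self)
  qed
  then show ?thesis by simp
qed

lemma G_pow_commutator_le_mult:
  assumes "1 \<le> n" "enat n < m"
  shows "cmod (hinner u1 ((G ^^ n) u2) - hinner ((G ^^ n) u1) u2)
           \<le> 2 * cs n * norm u1 * norm ((G ^^ (n - 1)) u2)"
proof (rule le_2_mult_if_le_scaled_squares)
  show "cs n \<ge> 0" using cs_ge_1[OF assms] by simp
  fix t :: real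
  assume "t > 0"
  have "hinner (t *\<^sub>R u1) ((G ^^ n) ((1/t) *\<^sub>R u2)) = complex_of_real (t * (1/t)) * hinner u1 ((G ^^ n) u2)"
    and "hinner ((G ^^ n) (t *\<^sub>R u1)) ((1/t) *\<^sub>R u2) = complex_of_real (t * (1/t)) * hinner ((G ^^ n) u1) u2"
    by (simp_all add: G_pow_scaleR hinner_scaleR_left hinner_scaleR_right)
  then show "cmod (hinner u1 ((G ^^ n) u2) - hinner ((G ^^ n) u1) u2)
      \<le> cs n * (t\<^sup>2 * (norm u1)\<^sup>2 + (norm ((G ^^ (n - 1)) u2))\<^sup>2 / t\<^sup>2)"
    using G_pow_commutator_le[OF assms, of "t *\<^sub>R u1" "(1/t) *\<^sub>R u2"] \<open>t > 0\<close>
    by (simp add: G_pow_scaleR power_mult_distrib power_divide)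
qed simp_all

definition growth :: "nat \<Rightarrow> real" where
  "growth n = 4 ^ n * c ^ n * (\<Prod>l = 1..n. cs l)"

lemma growth_Suc: "growth (Suc k) = 4 * c * cs (Suc k) * growth k"
  by (simp add: growth_def atLeastAtMostSuc_conv algebra_simps)

lemma growth_ge_1: "enat n < m \<Longrightarrow> growth n \<ge> 1"
proof (induction n)
  case (Suc k)
  have "growth k \<ge> 1" "cs (Suc k) \<ge> 1"
    using Suc.IH[OF enat_less_if_le[OF Suc.prems]] cs_ge_1[OF _ Suc.prems] by simp_all
  then have "1 \<le> c * cs (Suc k) * growth k"
    using c_ge_1 mult_mono[of 1 c 1 "cs (Suc k)"] mult_mono[of 1 "c * cs (Suc k)" 1 "growth k"]
    by simp
  moreover have "growth (Suc k) = 4 * (c * cs (Suc k) * growth k)"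
    by (simp add: growth_Suc mult.assoc)
  ultimately show ?case by linarith
qed (simp add: growth_def)

lemma norm_F_pow_R_pow_Suc_le:
  "norm ((F ^^ Suc k) ((R ^^ Suc k) x)) \<le> c * norm ((G ^^ k) ((R ^^ k) x))"
  using norm_F_R_le[of "(G ^^ k) ((R ^^ k) x)"] by (simp add: F_pow_R)

lemma cmod_hinner_G_pow_Suc_le:
  assumes F_bound: "\<And>y. norm ((F ^^ k) ((R ^^ k) y)) \<le> b * norm y"
  shows "cmod (hinner ((G ^^ Suc k) v) ((R ^^ Suc k) x)) \<le> norm v * (c * b * norm x)"
proof -
  have "hinner ((G ^^ Suc k) v) ((R ^^ Suc k) x) = hinner (R ((G ^^ Suc k) v)) ((R ^^ k) x)"
    using hermitian_hinner[OF hermitian_R, of "(G ^^ Suc k) v" "(R ^^ k) x"] by simp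
  also have "\<dots> = hinner ((F ^^ Suc k) (R v)) ((R ^^ k) x)"
    by (simp only: F_pow_R)
  also have "\<dots> = hinner (R v) ((F ^^ Suc k) ((R ^^ k) x))"
    by (rule hermitian_hinner[OF hermitian_funpow[OF hermitian_F]])
  also have "\<dots> = hinner v (R (F ((F ^^ k) ((R ^^ k) x))))"
    by (simp add: hermitian_hinner[OF hermitian_R])
  finally have "cmod (hinner ((G ^^ Suc k) v) ((R ^^ Suc k) x))
      \<le> norm v * norm (R (F ((F ^^ k) ((R ^^ k) x))))"
    by (simp add: cmod_hinner_le)
  also have "\<dots> \<le> norm v * (c * (b * norm x))"
    using order_trans[OF norm_R_F_le mult_left_mono[OF F_bound]] c_ge_1
    by (simp add: mult_left_mono)
  finally show ?thesis by (simp add: mult.assoc)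
qed

lemma norm_G_pow_R_pow_Suc_le:
  assumes k: "enat (Suc k) < m"
    and IH_G: "\<And>y. norm ((G ^^ k) ((R ^^ k) y)) \<le> growth k * norm y"
    and IH_F: "\<And>y. norm ((F ^^ k) ((R ^^ k) y)) \<le> growth k * norm y"
  shows "norm ((G ^^ Suc k) ((R ^^ Suc k) x)) \<le> growth (Suc k) * norm x"
proof -
  define u where "u = (R ^^ Suc k) x"
  define v where "v = (G ^^ Suc k) u"
  have cs: "cs (Suc k) \<ge> 1" using cs_ge_1[OF _ k] by simp
  have g: "growth k \<ge> 1" using growth_ge_1[OF enat_less_if_le[OF k]] by simp
  have "norm ((G ^^ k) u) \<le> growth k * norm (R x)"
    using IH_G[of "R x"] by (simp add: u_def funpow_swap1)
  also have "\<dots> \<le> growth k * norm x"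
    using g norm_R_le by (simp add: mult_left_mono)
  finally have "cmod (hinner v ((G ^^ Suc k) u) - hinner ((G ^^ Suc k) v) u)
      \<le> 2 * cs (Suc k) * norm v * (growth k * norm x)"
    using order_trans[OF G_pow_commutator_le_mult[OF _ k, of v u] mult_left_mono] cs by simp
  moreover have "(norm v)\<^sup>2 = cmod (hinner v ((G ^^ Suc k) u))"
    unfolding v_def[symmetric] hinner_self norm_of_real by simp
  ultimately have "(norm v)\<^sup>2 \<le> norm v * ((c + 2 * cs (Suc k)) * growth k * norm x)"
    using cmod_hinner_G_pow_Suc_le[OF IH_F, of v x, folded u_def]
      norm_triangle_sub[of "hinner v ((G ^^ Suc k) u)" "hinner ((G ^^ Suc k) v) u"]
    by (simp add: algebra_simps)
  then have "norm v \<le> (c + 2 * cs (Suc k)) * growth k * norm x"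
    using g c_ge_1 cs
    by (cases "norm v = 0") (simp_all add: power2_eq_square mult_le_cancel_left_pos)
  also have "\<dots> \<le> 4 * (c * cs (Suc k)) * growth k * norm x"
  proof -
    have "c \<le> c * cs (Suc k)" "cs (Suc k) \<le> c * cs (Suc k)"
      using mult_left_mono[OF cs, of c] mult_right_mono[OF c_ge_1, of "cs (Suc k)"] c_ge_1 cs
      by simp_all
    then have "c + 2 * cs (Suc k) \<le> 4 * (c * cs (Suc k))" using c_ge_1 by linarith
    then show ?thesis using g by (intro mult_right_mono) simp_all
  qed
  finally show ?thesis by (simp add: v_def u_def growth_Suc mult_ac)
qed

lemma norm_G_F_pow_R_pow_le:
  "enat n < m \<Longrightarrow> (\<forall>x. norm ((G ^^ n) ((R ^^ n) x)) \<le> growth n * norm x)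
      \<and> (\<forall>x. norm ((F ^^ n) ((R ^^ n) x)) \<le> growth n * norm x)"
proof (induction n)
  case (Suc k)
  then have k: "enat k < m" using enat_less_if_le by simp
  have "norm ((F ^^ Suc k) ((R ^^ Suc k) x)) \<le> growth (Suc k) * norm x" for x
  proof -
    have "norm ((F ^^ Suc k) ((R ^^ Suc k) x)) \<le> c * (growth k * norm x)"
      using order_trans[OF norm_F_pow_R_pow_Suc_le mult_left_mono] Suc.IH[OF k] c_ge_1 by simp
    also have "\<dots> \<le> (4 * cs (Suc k)) * (c * (growth k * norm x))"
    proof -
      have "0 \<le> c * (growth k * norm x)" using c_ge_1 growth_ge_1[OF k] by simp
      then show ?thesis using cs_ge_1[OF _ Suc.prems] by (simp add: mult_le_cancel_right1)
    qed
    also have "\<dots> = growth (Suc k) * norm x"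
      by (simp add: growth_Suc mult_ac)
    finally show ?thesis .
  qed
  then show ?case
    using norm_G_pow_R_pow_Suc_le[OF Suc.prems] Suc.IH[OF k] by blast
qed (simp add: growth_def)

lemma onorm_F_pow_R_pow_le:
  assumes "1 \<le> n" "enat n < m + 1"
  shows "onorm (\<lambda>x. (F ^^ n) ((R ^^ n) x)) \<le> 4 ^ (n - 1) * c ^ n * (\<Prod>l = 1..n - 1. cs l)"
proof -
  obtain k where n: "n = Suc k" using assms(1) by (cases n) auto
  have k: "enat k < m" using assms(2) by (cases m) (auto simp: n one_enat_def)
  have "4 ^ (n - 1) * c ^ n * (\<Prod>l = 1..n - 1. cs l) = c * growth k"
    by (simp add: n growth_def algebra_simps)
  moreover have "onorm (\<lambda>x. (F ^^ n) ((R ^^ n) x)) \<le> c * growth k"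
  proof (rule onorm_bound)
    show "0 \<le> c * growth k" using growth_ge_1[OF k] c_ge_1 by simp
    show "norm ((F ^^ n) ((R ^^ n) x)) \<le> c * growth k * norm x" for x
      using order_trans[OF norm_F_pow_R_pow_Suc_le mult_left_mono] norm_G_F_pow_R_pow_le[OF k] c_ge_1
      by (simp add: n mult.assoc)
  qed
  ultimately show ?thesis by simp
qed

end

theorem theorem2p1:
  fixes DH :: "'a::complex_hilbert set" and H :: "'a \<Rightarrow> 'a"
    and F :: "real \<Rightarrow> 'a \<Rightarrow> 'a"
    and m :: enat and \<D> :: "'a set"
    and c :: real and cs :: "nat \<Rightarrow> real"
  assumes H_sa: "self_adjoint_op DH H" and H_ge1: "op_ge DH H 1"
    and F_sa: "\<And>\<epsilon>. \<epsilon> > 0 \<Longrightarrow> bounded_self_adjoint (F \<epsilon>)"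
    and F_ge0: "\<And>\<epsilon>. \<epsilon> > 0 \<Longrightarrow> op_ge UNIV (F \<epsilon>) 0"
    and m_ge1: "m \<ge> 1"
    and core: "form_core DH H \<D>"
    and a: "\<And>\<epsilon>. \<epsilon> > 0 \<Longrightarrow> F \<epsilon> ` \<D> \<subseteq> form_dom DH H \<and>
              (\<exists>c\<epsilon>>0. \<forall>\<psi>\<in>\<D>. Re (hform DH H (F \<epsilon> \<psi>) (F \<epsilon> \<psi>)) \<le> c\<epsilon> * Re (hform DH H \<psi> \<psi>))"
    and b_c: "c \<ge> 1"
    and b: "\<And>\<epsilon> \<psi>. \<epsilon> > 0 \<Longrightarrow> \<psi> \<in> \<D> \<Longrightarrow>
              Re (hinner \<psi> (F \<epsilon> (F \<epsilon> \<psi>))) \<le> c\<^sup>2 * Re (hform DH H \<psi> \<psi>)"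
    and c_cs: "\<And>n. 1 \<le> n \<Longrightarrow> enat n < m \<Longrightarrow> cs n \<ge> 1"
    and c_bd: "\<And>n \<epsilon> \<phi>1 \<phi>2. 1 \<le> n \<Longrightarrow> enat n < m \<Longrightarrow> \<epsilon> > 0 \<Longrightarrow> \<phi>1 \<in> \<D> \<Longrightarrow> \<phi>2 \<in> \<D> \<Longrightarrow>
              cmod (hform DH H \<phi>1 ((F \<epsilon> ^^ n) \<phi>2) - hform DH H ((F \<epsilon> ^^ n) \<phi>1) \<phi>2)
                \<le> cs n * (Re (hform DH H \<phi>1 \<phi>1)
                     + Re (hform DH H ((F \<epsilon> ^^ (n - 1)) \<phi>2) ((F \<epsilon> ^^ (n - 1)) \<phi>2)))"
  shows "\<forall>n \<epsilon>. 1 \<le> n \<longrightarrow> enat n < m + 1 \<longrightarrow> \<epsilon> > 0 \<longrightarrow>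
           onorm (\<lambda>x. (F \<epsilon> ^^ n) (Hmpow DH H n x))
             \<le> 4 ^ (n - 1) * c ^ n * (\<Prod>l = 1..n - 1. cs l)"
proof (intro allI impI)
  fix n :: nat and \<epsilon> :: real
  assume n: "1 \<le> n" "enat n < m + 1" and "\<epsilon> > 0"
  obtain c\<epsilon> where "c\<epsilon> > 0"
    and "\<forall>\<psi>\<in>\<D>. Re (hform DH H (F \<epsilon> \<psi>) (F \<epsilon> \<psi>)) \<le> c\<epsilon> * Re (hform DH H \<psi> \<psi>)"
    using a[OF \<open>\<epsilon> > 0\<close>] by blast
  then interpret commutator_bounds DH H "F \<epsilon>" \<D> c\<epsilon> c m cs
    using H_sa H_ge1 F_sa[OF \<open>\<epsilon> > 0\<close>] core a[OF \<open>\<epsilon> > 0\<close>] b_c b[OF \<open>\<epsilon> > 0\<close>] c_cs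
      c_bd[OF _ _ \<open>\<epsilon> > 0\<close>]
    by unfold_locales (auto simp: bounded_self_adjoint_iff_hermitian)
  show "onorm (\<lambda>x. (F \<epsilon> ^^ n) (Hmpow DH H n x)) \<le> 4 ^ (n - 1) * c ^ n * (\<Prod>l = 1..n - 1. cs l)"
    using onorm_F_pow_R_pow_le[OF n] by (simp add: Hmpow_eq)
qed

end
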